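(* Under the standing assumptions below, for every $\theta\in\mathbb{R}^K$, $$(\theta^*-\theta)^T\bar g(\theta)=(1-\gamma)\|V_{\theta^*}-V_\theta\|_D^2+\gamma\|V_{\theta^*}-V_\theta\|_{\rm Dir}^2 .$$
   Context: Setting: finite state space $\mathcal S=[n]$, a fixed policy inducing an irreducible aperiodic transition matrix $P$ with unique stationary distribution $\pi$, bounded deterministic rewards, $r(s,s')=\sum_a\mu(s,a)r(s,a,s')$ ($\mu$ the policy), discount $\gamma\in(0,1)$. Features $\Phi\in\mathbb{R}^{n\times K}$ of full column rank with rows $\phi(s)^T$, $\|\phi(s)\|_2\le1$, $V_\theta=\Phi\theta$. Norms: $\|V\|_D^2=\sum_s\pi_sV(s)^2$; $\|V\|_{\rm Dir}^2=\frac12\sum_{s,s'}\pi_sP(s,s')(V(s')-V(s))^2$. Mean TD(0) direction $\bar g(\theta)=\sum_{s,s'}\pi_sP(s,s')\big(r(s,s')+\gamma\phi(s')^T\theta-\phi(s)^T\theta\big)\phi(s)$; $\theta^*$ is the unique vector with $\bar g(\theta^* )=0$. *)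

theory Defs
  imports "HOL-Analysis.Analysis"
begin

(* Finite state space 's, transition matrix P (rows indexed by current state). *)

definition stochastic :: "real^'s^'s \<Rightarrow> bool" where
  "stochastic P \<longleftrightarrow> (\<forall>s s'. P $ s $ s' \<ge> 0) \<and> (\<forall>s. (\<Sum>s'\<in>UNIV. P $ s $ s') = 1)"

definition mpow :: "real^'s^'s \<Rightarrow> nat \<Rightarrow> real^'s^'s" where
  "mpow P n = (((**) P) ^^ n) (mat 1)"

definition irreducible_chain :: "real^'s^'s \<Rightarrow> bool" where
  "irreducible_chain P \<longleftrightarrow> (\<forall>s s'. \<exists>n>0. mpow P n $ s $ s' > 0)"

definition aperiodic_chain :: "real^'s^'s \<Rightarrow> bool" where
  "aperiodic_chain P \<longleftrightarrow> (\<forall>s. Gcd {n. n > 0 \<and> mpow P n $ s $ s > 0} = (1::nat))"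

definition stationary_dist :: "real^'s^'s \<Rightarrow> ('s \<Rightarrow> real) \<Rightarrow> bool" where
  "stationary_dist P \<pi> \<longleftrightarrow> (\<forall>s. \<pi> s \<ge> 0) \<and> (\<Sum>s\<in>UNIV. \<pi> s) = 1 \<and>
     (\<forall>s'. (\<Sum>s\<in>UNIV. \<pi> s * P $ s $ s') = \<pi> s')"

definition avg_reward :: "('s \<Rightarrow> 'a::finite \<Rightarrow> real) \<Rightarrow> ('s \<Rightarrow> 'a \<Rightarrow> 's \<Rightarrow> real) \<Rightarrow> 's \<Rightarrow> 's \<Rightarrow> real" where
  "avg_reward \<mu> r s s' = (\<Sum>a\<in>UNIV. \<mu> s a * r s a s')"

definition Vtheta :: "('s \<Rightarrow> real^'k) \<Rightarrow> real^'k \<Rightarrow> 's \<Rightarrow> real" where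
  "Vtheta \<phi> \<theta> s = \<phi> s \<bullet> \<theta>"

definition D_norm_sq :: "('s::finite \<Rightarrow> real) \<Rightarrow> ('s \<Rightarrow> real) \<Rightarrow> real" where
  "D_norm_sq \<pi> V = (\<Sum>s\<in>UNIV. \<pi> s * (V s)\<^sup>2)"

definition Dir_norm_sq :: "('s::finite \<Rightarrow> real) \<Rightarrow> real^'s^'s \<Rightarrow> ('s \<Rightarrow> real) \<Rightarrow> real" where
  "Dir_norm_sq \<pi> P V = (1/2) * (\<Sum>s\<in>UNIV. \<Sum>s'\<in>UNIV. \<pi> s * P $ s $ s' * (V s' - V s)\<^sup>2)"

definition gbar :: "('s::finite \<Rightarrow> real) \<Rightarrow> real^'s^'s \<Rightarrow> ('s \<Rightarrow> 's \<Rightarrow> real) \<Rightarrow> real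
      \<Rightarrow> ('s \<Rightarrow> real^'k) \<Rightarrow> real^'k \<Rightarrow> real^'k" where
  "gbar \<pi> P R \<gamma> \<phi> \<theta> = (\<Sum>s\<in>UNIV. \<Sum>s'\<in>UNIV.
      (\<pi> s * P $ s $ s' * (R s s' + \<gamma> * (\<phi> s' \<bullet> \<theta>) - \<phi> s \<bullet> \<theta>)) *\<^sub>R \<phi> s)"

end

theory Submission
  imports Defs
begin

text \<open>The reward term cancels in \<open>g(\<theta>) - g(\<theta>*)\<close>, so with \<open>u = V(\<theta>*) - V(\<theta>)\<close> the
  left-hand side is the quadratic form \<open>\<Sum> \<pi>(s) P(s,s') (u(s) - \<gamma> u(s')) u(s)\<close>.
  Because P has unit row sums and \<pi> is stationary, both marginals of the weights
  \<open>\<pi>(s) P(s,s')\<close> equal \<pi>; expanding the square in the Dirichlet form then shows that the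
  cross term \<open>\<Sum> \<pi>(s) P(s,s') u(s) u(s')\<close> is \<open>\<parallel>u\<parallel>_D^2 - \<parallel>u\<parallel>_Dir^2\<close>.\<close>

lemma sum_stationary_weight_source:
  assumes "stochastic P"
  shows "(\<Sum>s\<in>UNIV. \<Sum>s'\<in>UNIV. \<pi> s * P $ s $ s' * f s) = (\<Sum>s\<in>UNIV. \<pi> s * f s)"
proof (intro sum.cong refl)
  fix s
  have "(\<Sum>s'\<in>UNIV. \<pi> s * P $ s $ s' * f s) = \<pi> s * f s * (\<Sum>s'\<in>UNIV. P $ s $ s')"
    by (simp add: sum_distrib_left algebra_simps)
  then show "(\<Sum>s'\<in>UNIV. \<pi> s * P $ s $ s' * f s) = \<pi> s * f s"
    using assms by (simp add: stochastic_def)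
qed

lemma sum_stationary_weight_target:
  assumes "stationary_dist P \<pi>"
  shows "(\<Sum>s\<in>UNIV. \<Sum>s'\<in>UNIV. \<pi> s * P $ s $ s' * f s') = (\<Sum>s\<in>UNIV. \<pi> s * f s)"
proof -
  have "(\<Sum>s\<in>UNIV. \<Sum>s'\<in>UNIV. \<pi> s * P $ s $ s' * f s')
      = (\<Sum>s'\<in>UNIV. f s' * (\<Sum>s\<in>UNIV. \<pi> s * P $ s $ s'))"
    by (subst sum.swap) (simp add: sum_distrib_left algebra_simps)
  also have "\<dots> = (\<Sum>s'\<in>UNIV. \<pi> s' * f s')"
    using assms by (simp add: stationary_dist_def mult.commute)
  finally show ?thesis .
qed

lemma Dir_norm_sq_eq_D_norm_sq_minus_cross:
  assumes "stochastic P" and "stationary_dist P \<pi>"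
  shows "Dir_norm_sq \<pi> P V
    = D_norm_sq \<pi> V - (\<Sum>s\<in>UNIV. \<Sum>s'\<in>UNIV. \<pi> s * P $ s $ s' * V s * V s')"
proof -
  have "Dir_norm_sq \<pi> P V
      = (1/2) * ((\<Sum>s\<in>UNIV. \<Sum>s'\<in>UNIV. \<pi> s * P $ s $ s' * (V s')\<^sup>2)
                + (\<Sum>s\<in>UNIV. \<Sum>s'\<in>UNIV. \<pi> s * P $ s $ s' * (V s)\<^sup>2))
        - (\<Sum>s\<in>UNIV. \<Sum>s'\<in>UNIV. \<pi> s * P $ s $ s' * V s * V s')"
    unfolding Dir_norm_sq_def
    by (simp add: sum.distrib[symmetric] sum_subtractf[symmetric] sum_distrib_left
        power2_eq_square algebra_simps)
  then show ?thesis
    unfolding sum_stationary_weight_source[OF assms(1)]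
      sum_stationary_weight_target[OF assms(2)] D_norm_sq_def
    by simp
qed

lemma stationary_TD_quadratic_form:
  assumes "stochastic P" and "stationary_dist P \<pi>"
  shows "(\<Sum>s\<in>UNIV. \<Sum>s'\<in>UNIV. \<pi> s * P $ s $ s' * (V s - \<gamma> * V s') * V s)
    = (1 - \<gamma>) * D_norm_sq \<pi> V + \<gamma> * Dir_norm_sq \<pi> P V"
proof -
  have "(\<Sum>s\<in>UNIV. \<Sum>s'\<in>UNIV. \<pi> s * P $ s $ s' * (V s - \<gamma> * V s') * V s)
      = (\<Sum>s\<in>UNIV. \<Sum>s'\<in>UNIV. \<pi> s * P $ s $ s' * (V s)\<^sup>2)
        - \<gamma> * (\<Sum>s\<in>UNIV. \<Sum>s'\<in>UNIV. \<pi> s * P $ s $ s' * V s * V s')"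
    by (simp add: sum_subtractf sum_distrib_left algebra_simps power2_eq_square)
  also have "\<dots> = D_norm_sq \<pi> V
        - \<gamma> * (\<Sum>s\<in>UNIV. \<Sum>s'\<in>UNIV. \<pi> s * P $ s $ s' * V s * V s')"
    unfolding sum_stationary_weight_source[OF assms(1)] D_norm_sq_def ..
  finally show ?thesis
    unfolding Dir_norm_sq_eq_D_norm_sq_minus_cross[OF assms] by (simp add: algebra_simps)
qed

lemma inner_gbar_diff:
  "(\<theta>' - \<theta>) \<bullet> (gbar \<pi> P R \<gamma> \<phi> \<theta> - gbar \<pi> P R \<gamma> \<phi> \<theta>')
    = (\<Sum>s\<in>UNIV. \<Sum>s'\<in>UNIV. \<pi> s * P $ s $ s'
        * (\<phi> s \<bullet> (\<theta>' - \<theta>) - \<gamma> * (\<phi> s' \<bullet> (\<theta>' - \<theta>))) * (\<phi> s \<bullet> (\<theta>' - \<theta>)))"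
  unfolding gbar_def sum_subtractf[symmetric] inner_sum_right
  by (intro sum.cong refl) (simp add: inner_commute inner_diff_right algebra_simps)

theorem corollary1:
  fixes P :: "real^'s::finite^'s"
    and \<pi> :: "'s \<Rightarrow> real"
    and \<mu> :: "'s \<Rightarrow> 'a::finite \<Rightarrow> real"
    and r :: "'s \<Rightarrow> 'a \<Rightarrow> 's \<Rightarrow> real"
    and \<gamma> :: real
    and \<phi> :: "'s \<Rightarrow> real^'k::finite"
    and \<theta>s \<theta> :: "real^'k"
  assumes "stochastic P"
    and "irreducible_chain P"
    and "aperiodic_chain P"
    and "stationary_dist P \<pi>"
    and "\<forall>s a. \<mu> s a \<ge> 0" and "\<forall>s. (\<Sum>a\<in>UNIV. \<mu> s a) = 1"
    and "\<exists>B. \<forall>s a s'. \<bar>r s a s'\<bar> \<le> B"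
    and "0 < \<gamma>" and "\<gamma> < 1"
    and "\<forall>s. norm (\<phi> s) \<le> 1"
    and "\<forall>\<theta>'. (\<forall>s. \<phi> s \<bullet> \<theta>' = 0) \<longrightarrow> \<theta>' = 0"
    and "gbar \<pi> P (avg_reward \<mu> r) \<gamma> \<phi> \<theta>s = 0"
    and "\<forall>\<theta>'. gbar \<pi> P (avg_reward \<mu> r) \<gamma> \<phi> \<theta>' = 0 \<longrightarrow> \<theta>' = \<theta>s"
  shows "(\<theta>s - \<theta>) \<bullet> gbar \<pi> P (avg_reward \<mu> r) \<gamma> \<phi> \<theta>
    = (1 - \<gamma>) * D_norm_sq \<pi> (\<lambda>s. Vtheta \<phi> \<theta>s s - Vtheta \<phi> \<theta> s)
      + \<gamma> * Dir_norm_sq \<pi> P (\<lambda>s. Vtheta \<phi> \<theta>s s - Vtheta \<phi> \<theta> s)"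
proof -
  let ?g = "gbar \<pi> P (avg_reward \<mu> r) \<gamma> \<phi>"
  define u where "u s = \<phi> s \<bullet> (\<theta>s - \<theta>)" for s
  have u_eq: "(\<lambda>s. Vtheta \<phi> \<theta>s s - Vtheta \<phi> \<theta> s) = u"
    by (simp add: fun_eq_iff Vtheta_def u_def inner_diff_right)
  have "(\<theta>s - \<theta>) \<bullet> ?g \<theta> = (\<theta>s - \<theta>) \<bullet> (?g \<theta> - ?g \<theta>s)"
    using assms(12) by simp
  also have "\<dots> = (\<Sum>s\<in>UNIV. \<Sum>s'\<in>UNIV. \<pi> s * P $ s $ s' * (u s - \<gamma> * u s') * u s)"
    unfolding inner_gbar_diff u_def ..
  also have "\<dots> = (1 - \<gamma>) * D_norm_sq \<pi> u + \<gamma> * Dir_norm_sq \<pi> P u"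
    using stationary_TD_quadratic_form[OF assms(1,4)] .
  finally show ?thesis
    unfolding u_eq .
qed

end
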